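(* Let $\mathbb{X}$ be a reflexive real Banach space and $\mathbb{Y}$ a smooth real Banach space (both of dimension greater than $1$). Let $T\in\mathbb{K}(\mathbb{X},\mathbb{Y})$ with $\|T\|=1$. Suppose that for every $\epsilon>0$, $T$ admits a uniform $\epsilon$-BPB approximation $A_\epsilon\in\mathbb{K}(\mathbb{X},\mathbb{Y})$ with $A_\epsilon\neq T$ which is a smooth point of $\mathbb{K}(\mathbb{X},\mathbb{Y})$. Then $T$ is a smooth point of $\mathbb{K}(\mathbb{X},\mathbb{Y})$.
   Context: $\mathbb{K}(\mathbb{X},\mathbb{Y})$ (resp. $\mathbb{L}(\mathbb{X},\mathbb{Y})$) denotes the compact (resp. bounded) linear operators with the operator norm; $S_{\mathbb{X}}$ is the unit sphere. A nonzero element $x$ of a Banach space $\mathbb{Z}$ is a smooth point if there is a unique $f\in\mathbb{Z}^*$ with $\|f\|=1$ and $f(x)=\|x\|$; $\mathbb{Y}$ is smooth if all its nonzero points are smooth. For $T$ with $\|T\|=1$ and fixed $\epsilon>0$, an operator $A\in\mathbb{L}(\mathbb{X},\mathbb{Y})$ with $\|A\|=1$ is a uniform $\epsilon$-BPB approximation of $T$ if there exists $\delta(\epsilon)>0$ such that whenever $x_0\in S_{\mathbb{X}}$ satisfies $\|Tx_0\|>1-\delta(\epsilon)$, there exists $u_0\in S_{\mathbb{X}}$ with $\|Au_0\|=1$, $\|u_0-x_0\|<\epsilon$ and $\|A-T\|<\epsilon$. *)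

theory Defs
  imports "HOL-Analysis.Analysis"
begin

definition dim_gt_one :: "'a::real_vector itself \<Rightarrow> bool" where
  "dim_gt_one _ \<longleftrightarrow> \<not> (\<exists>v::'a. \<forall>x::'a. \<exists>c::real. x = c *\<^sub>R v)"

definition reflexive_space :: "'a::real_normed_vector itself \<Rightarrow> bool" where
  "reflexive_space _ \<longleftrightarrow>
     (\<forall>\<phi> :: ('a \<Rightarrow>\<^sub>L real) \<Rightarrow>\<^sub>L real. \<exists>x::'a. \<forall>f. blinfun_apply \<phi> f = blinfun_apply f x)"

definition smooth_point :: "'a::real_normed_vector \<Rightarrow> bool" where
  "smooth_point x \<longleftrightarrow> x \<noteq> 0 \<and> (\<exists>!f :: 'a \<Rightarrow>\<^sub>L real. norm f = 1 \<and> blinfun_apply f x = norm x)"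

definition smooth_space :: "'a::real_normed_vector itself \<Rightarrow> bool" where
  "smooth_space _ \<longleftrightarrow> (\<forall>y::'a. y \<noteq> 0 \<longrightarrow> smooth_point y)"

text \<open>Dual space of a linear subspace S of a normed space (with the induced norm):
  bounded linear functionals on S, compared only on S.\<close>
definition bounded_linear_on :: "'v::real_normed_vector set \<Rightarrow> ('v \<Rightarrow> real) \<Rightarrow> bool" where
  "bounded_linear_on S f \<longleftrightarrow>
     (\<forall>a\<in>S. \<forall>b\<in>S. f (a + b) = f a + f b) \<and>
     (\<forall>c. \<forall>a\<in>S. f (c *\<^sub>R a) = c * f a) \<and>
     (\<exists>K. \<forall>a\<in>S. \<bar>f a\<bar> \<le> K * norm a)"

definition dual_norm_on :: "'v::real_normed_vector set \<Rightarrow> ('v \<Rightarrow> real) \<Rightarrow> real" where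
  "dual_norm_on S f = Sup {\<bar>f a\<bar> | a. a \<in> S \<and> norm a \<le> 1}"

definition smooth_point_on :: "'v::real_normed_vector set \<Rightarrow> 'v \<Rightarrow> bool" where
  "smooth_point_on S x \<longleftrightarrow> x \<in> S \<and> x \<noteq> 0 \<and>
     (\<exists>f. bounded_linear_on S f \<and> dual_norm_on S f = 1 \<and> f x = norm x \<and>
        (\<forall>g. bounded_linear_on S g \<and> dual_norm_on S g = 1 \<and> g x = norm x \<longrightarrow>
             (\<forall>a\<in>S. g a = f a)))"

definition compact_ops :: "('a::real_normed_vector \<Rightarrow>\<^sub>L 'b::real_normed_vector) set" where
  "compact_ops = {T. compact (closure (blinfun_apply T ` cball 0 1))}"

definition uniform_BPB_approx ::
  "('a::real_normed_vector \<Rightarrow>\<^sub>L 'b::real_normed_vector) \<Rightarrow> real \<Rightarrow> ('a \<Rightarrow>\<^sub>L 'b) \<Rightarrow> bool" where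
  "uniform_BPB_approx T \<epsilon> A \<longleftrightarrow> norm A = 1 \<and>
     (\<exists>\<delta>>0. \<forall>x0. norm x0 = 1 \<and> norm (T x0) > 1 - \<delta> \<longrightarrow>
        (\<exists>u0. norm u0 = 1 \<and> norm (A u0) = 1 \<and> norm (u0 - x0) < \<epsilon> \<and> norm (A - T) < \<epsilon>))"

end

theory Submission
  imports Defs
begin

(* A compact operator A that is a smooth point of K(X,Y) attains its norm only at +-u: two norming
   unit vectors u, v give norming functionals R |-> psi (R u) and R |-> psi' (R v) of A in K(X,Y),
   which must coincide, and testing them on the rank-one operators x |-> phi x *R A u forces v = +-u.
   Through the uniform BPB approximations this transfers to T: the unit vectors that almost norm T
   cluster around +-u for a single u.  Hence an almost norming sequence of T is totally bounded, T
   attains its norm at some x0, and every almost norming vector is close to +-x0.  If psi is the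
   support functional at the smooth point T x0 of Y, the one-sided derivative of the norm at T x0
   then yields ||T + t S|| <= 1 + t (psi (S x0) + eta) for small t > 0, so every norming functional
   of T in K(X,Y) is dominated by, hence equal to, S |-> psi (S x0). *)

section \<open>Hahn-Banach theorem for sublinear functionals\<close>

(* Partial linear functionals are represented by their graphs, so that Zorn's lemma applies to
   the inclusion order; G is the graph that every extension must contain. *)
definition dominated_partial_functional ::
    "('a::real_vector \<Rightarrow> real) \<Rightarrow> ('a \<times> real) set \<Rightarrow> ('a \<times> real) set \<Rightarrow> bool" where
  "dominated_partial_functional p G H \<longleftrightarrow>
    (\<forall>x a b. (x, a) \<in> H \<longrightarrow> (x, b) \<in> H \<longrightarrow> a = b) \<and>
    (\<forall>x a y b. (x, a) \<in> H \<longrightarrow> (y, b) \<in> H \<longrightarrow> (x + y, a + b) \<in> H) \<and>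
    (\<forall>x a c. (x, a) \<in> H \<longrightarrow> (c *\<^sub>R x, c * a) \<in> H) \<and>
    (\<forall>x a. (x, a) \<in> H \<longrightarrow> a \<le> p x) \<and> G \<subseteq> H"

lemma sublinear_scaleR_ge:
  fixes p :: "'a::real_vector \<Rightarrow> real"
  assumes padd: "\<And>x y. p (x + y) \<le> p x + p y"
    and phom: "\<And>c x. c \<ge> 0 \<Longrightarrow> p (c *\<^sub>R x) = c * p x"
  shows "t * p z \<le> p (t *\<^sub>R z)"
proof (cases "t \<ge> 0")
  case True
  then show ?thesis by (simp add: phom)
next
  case False
  have "0 = p (0 *\<^sub>R z)" using phom[of 0 z] by simp
  also have "\<dots> \<le> p (t *\<^sub>R z) + p ((- t) *\<^sub>R z)"
    using padd[of "t *\<^sub>R z" "(- t) *\<^sub>R z"] by (simp flip: scaleR_add_left)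
  also have "\<dots> = p (t *\<^sub>R z) - t * p z"
    using phom[of "- t" z] False by simp
  finally show ?thesis by simp
qed

lemma dominated_partial_functional_extension_constant:
  fixes p :: "'a::real_vector \<Rightarrow> real"
  assumes padd: "\<And>x y. p (x + y) \<le> p x + p y"
    and H: "dominated_partial_functional p G H" and H0: "(0, 0) \<in> H"
  obtains c where "\<And>y b. (y, b) \<in> H \<Longrightarrow> b - p (y - x0) \<le> c"
    and "\<And>y b. (y, b) \<in> H \<Longrightarrow> c \<le> p (y + x0) - b"
proof
  have sep: "b' - p (y' - x0) \<le> p (y + x0) - b" if "(y, b) \<in> H" "(y', b') \<in> H" for y b y' b'
  proof -
    have "b + b' \<le> p (y + y')"
      using H that unfolding dominated_partial_functional_def by blast
    also have "y + y' = (y' - x0) + (y + x0)" by simp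
    finally show ?thesis using padd[of "y' - x0" "y + x0"] by linarith
  qed
  define L where "L = {b - p (y - x0) | y b. (y, b) \<in> H}"
  have "L \<noteq> {}" using H0 unfolding L_def by blast
  moreover have "bdd_above L" unfolding L_def bdd_above_def using sep[OF H0] by auto
  ultimately show "b - p (y - x0) \<le> Sup L" "Sup L \<le> p (y + x0) - b" if "(y, b) \<in> H" for y b
    using that sep by (auto simp: L_def intro!: cSup_upper cSup_least)
qed

lemma dominated_partial_functional_extension_le:
  fixes p :: "'a::real_vector \<Rightarrow> real"
  assumes phom: "\<And>c x. c \<ge> 0 \<Longrightarrow> p (c *\<^sub>R x) = c * p x"
    and H: "dominated_partial_functional p G H"
    and below: "\<And>y b. (y, b) \<in> H \<Longrightarrow> b - p (y - x0) \<le> c"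
    and above: "\<And>y b. (y, b) \<in> H \<Longrightarrow> c \<le> p (y + x0) - b"
    and yb: "(y, b) \<in> H"
  shows "b + t * c \<le> p (y + t *\<^sub>R x0)"
proof -
  have scaled: "((1 / s) *\<^sub>R y, (1 / s) * b) \<in> H" for s
    using H yb unfolding dominated_partial_functional_def by blast
  consider "t = 0" | "t > 0" | "t < 0" by linarith
  then show ?thesis
  proof cases
    case 1
    then show ?thesis using H yb unfolding dominated_partial_functional_def by simp
  next
    case 2
    have eq: "t *\<^sub>R ((1 / t) *\<^sub>R y + x0) = y + t *\<^sub>R x0"
      using 2 by (simp add: algebra_simps)
    have "t * c \<le> t * (p ((1 / t) *\<^sub>R y + x0) - (1 / t) * b)"
      using above[OF scaled] 2 by (intro mult_left_mono) auto
    also have "\<dots> = p (y + t *\<^sub>R x0) - b"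
      using phom[of t "(1 / t) *\<^sub>R y + x0"] eq 2 by (simp add: right_diff_distrib)
    finally show ?thesis by simp
  next
    case 3
    define s where "s = - t"
    have s: "s > 0" using 3 by (simp add: s_def)
    have eq: "s *\<^sub>R ((1 / s) *\<^sub>R y - x0) = y + t *\<^sub>R x0"
      using s by (simp add: s_def algebra_simps)
    have "b - p (y + t *\<^sub>R x0) = s * ((1 / s) * b - p ((1 / s) *\<^sub>R y - x0))"
      using phom[of s "(1 / s) *\<^sub>R y - x0"] eq s by (simp add: right_diff_distrib)
    also have "\<dots> \<le> s * c"
      using below[OF scaled] s by (intro mult_left_mono) auto
    finally show ?thesis by (simp add: s_def)
  qed
qed

lemma dominated_partial_functional_extension:
  fixes p :: "'a::real_vector \<Rightarrow> real"
  assumes phom: "\<And>c x. c \<ge> 0 \<Longrightarrow> p (c *\<^sub>R x) = c * p x"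
    and H: "dominated_partial_functional p G H"
    and below: "\<And>y b. (y, b) \<in> H \<Longrightarrow> b - p (y - x0) \<le> c"
    and above: "\<And>y b. (y, b) \<in> H \<Longrightarrow> c \<le> p (y + x0) - b"
    and x0: "\<And>a. (x0, a) \<notin> H"
  shows "dominated_partial_functional p G {(y + t *\<^sub>R x0, b + t * c) | y b t. (y, b) \<in> H}"
    (is "dominated_partial_functional p G ?H'")
proof -
  from H have graph: "\<And>x a b. (x, a) \<in> H \<Longrightarrow> (x, b) \<in> H \<Longrightarrow> a = b"
    and add: "\<And>x a y b. (x, a) \<in> H \<Longrightarrow> (y, b) \<in> H \<Longrightarrow> (x + y, a + b) \<in> H"
    and scale: "\<And>x a c. (x, a) \<in> H \<Longrightarrow> (c *\<^sub>R x, c * a) \<in> H"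
    and "G \<subseteq> H"
    unfolding dominated_partial_functional_def by blast+
  have coord_unique: "t = t'"
    if "(y, b) \<in> H" "(y', b') \<in> H" "y + t *\<^sub>R x0 = y' + t' *\<^sub>R x0" for y b y' b' t t'
  proof (rule ccontr)
    assume "t \<noteq> t'"
    have "(t' - t) *\<^sub>R x0 = y + (- 1) *\<^sub>R y'"
      using that(3) by (simp add: algebra_simps)
    then have "(1 / (t' - t)) *\<^sub>R ((t' - t) *\<^sub>R x0) = (1 / (t' - t)) *\<^sub>R (y + (- 1) *\<^sub>R y')"
      by simp
    then have "x0 = (1 / (t' - t)) *\<^sub>R (y + (- 1) *\<^sub>R y')"
      using \<open>t \<noteq> t'\<close> by simp
    then show False
      using x0 scale[OF add[OF that(1) scale[OF that(2), of "- 1"]]] by metis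
  qed
  have in_H': "(y + t *\<^sub>R x0, b + t * c) \<in> ?H'" if "(y, b) \<in> H" for y b t
    using that by blast
  show ?thesis
    unfolding dominated_partial_functional_def
  proof (intro conjI allI impI)
    fix x a b assume "(x, a) \<in> ?H'" "(x, b) \<in> ?H'"
    then obtain y b' t y' b'' t' where
      "(y, b') \<in> H" "x = y + t *\<^sub>R x0" "a = b' + t * c"
      "(y', b'') \<in> H" "x = y' + t' *\<^sub>R x0" "b = b'' + t' * c"
      by blast
    moreover from this have "t = t'" using coord_unique by metis
    ultimately show "a = b" using graph by auto
  next
    fix x a y b assume "(x, a) \<in> ?H'" "(y, b) \<in> ?H'"
    then obtain y1 b1 t1 y2 b2 t2 where h: "(y1, b1) \<in> H" "(y2, b2) \<in> H"
      and "x = y1 + t1 *\<^sub>R x0" "a = b1 + t1 * c" "y = y2 + t2 *\<^sub>R x0" "b = b2 + t2 * c"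
      by blast
    then have "(x + y, a + b) = ((y1 + y2) + (t1 + t2) *\<^sub>R x0, (b1 + b2) + (t1 + t2) * c)"
      by (simp add: algebra_simps)
    then show "(x + y, a + b) \<in> ?H'" by (simp only: in_H'[OF add[OF h(1,2)]])
  next
    fix x a r assume "(x, a) \<in> ?H'"
    then obtain y b t where h: "(y, b) \<in> H" and "x = y + t *\<^sub>R x0" "a = b + t * c"
      by blast
    then have "(r *\<^sub>R x, r * a) = (r *\<^sub>R y + (r * t) *\<^sub>R x0, r * b + (r * t) * c)"
      by (simp add: algebra_simps)
    then show "(r *\<^sub>R x, r * a) \<in> ?H'" by (simp only: in_H'[OF scale[OF h(1)]])
  next
    fix x a assume "(x, a) \<in> ?H'"
    then show "a \<le> p x"
      using dominated_partial_functional_extension_le[OF phom H below above] by blast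
  next
    show "G \<subseteq> ?H'" using \<open>G \<subseteq> H\<close> in_H'[of _ _ 0] by auto
  qed
qed

lemma dominated_partial_functional_extend:
  fixes p :: "'a::real_vector \<Rightarrow> real"
  assumes padd: "\<And>x y. p (x + y) \<le> p x + p y"
    and phom: "\<And>c x. c \<ge> 0 \<Longrightarrow> p (c *\<^sub>R x) = c * p x"
    and H: "dominated_partial_functional p G H" and H0: "(0, 0) \<in> H"
    and x0: "\<And>a. (x0, a) \<notin> H"
  shows "\<exists>H'. dominated_partial_functional p G H' \<and> H \<subset> H'"
proof -
  obtain c where below: "\<And>y b. (y, b) \<in> H \<Longrightarrow> b - p (y - x0) \<le> c"
    and above: "\<And>y b. (y, b) \<in> H \<Longrightarrow> c \<le> p (y + x0) - b"
    using dominated_partial_functional_extension_constant[OF padd H H0] by blast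
  define H' where "H' = {(y + t *\<^sub>R x0, b + t * c) | y b t. (y, b) \<in> H}"
  have in_H': "(y + t *\<^sub>R x0, b + t * c) \<in> H'" if "(y, b) \<in> H" for y b t
    using that unfolding H'_def by blast
  have "H \<subseteq> H'" using in_H'[of _ _ 0] by auto
  moreover have "(x0, c) \<in> H' - H" using in_H'[OF H0, of 1] x0 by auto
  moreover have "dominated_partial_functional p G H'"
    unfolding H'_def by (rule dominated_partial_functional_extension[OF phom H below above x0])
  ultimately show ?thesis by blast
qed

lemma dominated_partial_functional_line:
  fixes p :: "'a::real_vector \<Rightarrow> real"
  assumes padd: "\<And>x y. p (x + y) \<le> p x + p y"
    and phom: "\<And>c x. c \<ge> 0 \<Longrightarrow> p (c *\<^sub>R x) = c * p x"
    and G: "G = {(t *\<^sub>R z, t * p z) | t. True}"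
  shows "dominated_partial_functional p G G"
  unfolding dominated_partial_functional_def
proof (intro conjI allI impI)
  fix x a b assume "(x, a) \<in> G" "(x, b) \<in> G"
  then obtain t t' where "x = t *\<^sub>R z" "a = t * p z" "x = t' *\<^sub>R z" "b = t' * p z"
    unfolding G by blast
  moreover have "p 0 = 0" using phom[of 0 0] by simp
  ultimately show "a = b" by (cases "z = 0") auto
next
  fix x a y b assume "(x, a) \<in> G" "(y, b) \<in> G"
  then obtain t t' where "x = t *\<^sub>R z" "a = t * p z" "y = t' *\<^sub>R z" "b = t' * p z"
    unfolding G by blast
  then have "(x + y, a + b) = ((t + t') *\<^sub>R z, (t + t') * p z)" by (simp add: algebra_simps)
  then show "(x + y, a + b) \<in> G" unfolding G by blast
next
  fix x a c assume "(x, a) \<in> G"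
  then obtain t where "x = t *\<^sub>R z" "a = t * p z" unfolding G by blast
  then have "(c *\<^sub>R x, c * a) = ((c * t) *\<^sub>R z, (c * t) * p z)" by simp
  then show "(c *\<^sub>R x, c * a) \<in> G" unfolding G by blast
next
  fix x a assume "(x, a) \<in> G"
  then show "a \<le> p x" unfolding G using sublinear_scaleR_ge[OF padd phom] by blast
qed simp

lemma dominated_partial_functional_Union:
  assumes "C \<noteq> {}" and "\<And>H. H \<in> C \<Longrightarrow> dominated_partial_functional p G H"
    and chain: "\<And>H H'. H \<in> C \<Longrightarrow> H' \<in> C \<Longrightarrow> H \<subseteq> H' \<or> H' \<subseteq> H"
  shows "dominated_partial_functional p G (\<Union>C)"
proof -
  have good: "\<And>H. H \<in> C \<Longrightarrow> dominated_partial_functional p G H" by fact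
  have common: "\<exists>H\<in>C. g \<in> H \<and> g' \<in> H" if "g \<in> \<Union>C" "g' \<in> \<Union>C" for g g'
    using that chain by blast
  show ?thesis
    unfolding dominated_partial_functional_def
  proof (intro conjI allI impI)
    fix x a b assume "(x, a) \<in> \<Union>C" "(x, b) \<in> \<Union>C"
    then obtain H where "H \<in> C" "(x, a) \<in> H" "(x, b) \<in> H" using common by blast
    then show "a = b" using good unfolding dominated_partial_functional_def by blast
  next
    fix x a y b assume "(x, a) \<in> \<Union>C" "(y, b) \<in> \<Union>C"
    then obtain H where "H \<in> C" "(x, a) \<in> H" "(y, b) \<in> H" using common by blast
    then show "(x + y, a + b) \<in> \<Union>C" using good unfolding dominated_partial_functional_def by blast
  next
    fix x a c assume "(x, a) \<in> \<Union>C"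
    then obtain H where "H \<in> C" "(x, a) \<in> H" by blast
    then show "(c *\<^sub>R x, c * a) \<in> \<Union>C" using good unfolding dominated_partial_functional_def by blast
  next
    fix x a assume "(x, a) \<in> \<Union>C"
    then obtain H where "H \<in> C" "(x, a) \<in> H" by blast
    then show "a \<le> p x" using good unfolding dominated_partial_functional_def by blast
  next
    obtain H where "H \<in> C" using \<open>C \<noteq> {}\<close> by blast
    then show "G \<subseteq> \<Union>C" using good unfolding dominated_partial_functional_def by blast
  qed
qed

lemma dominated_partial_functional_total:
  fixes p :: "'a::real_vector \<Rightarrow> real"
  assumes H: "dominated_partial_functional p G H" and total: "\<And>x. \<exists>b. (x, b) \<in> H"
  shows "\<exists>\<phi>. linear \<phi> \<and> (\<forall>x. \<phi> x \<le> p x) \<and> (\<forall>(x, b) \<in> G. \<phi> x = b)"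
proof -
  define \<phi> where "\<phi> x = (THE b. (x, b) \<in> H)" for x
  have graph: "\<And>x a b. (x, a) \<in> H \<Longrightarrow> (x, b) \<in> H \<Longrightarrow> a = b"
    using H unfolding dominated_partial_functional_def by blast
  have in_H: "(x, \<phi> x) \<in> H" for x
    unfolding \<phi>_def using total[of x] graph by (metis theI)
  have \<phi>_eq: "\<phi> x = b" if "(x, b) \<in> H" for x b
    using graph[OF that in_H] by simp
  have "linear \<phi>"
    unfolding linear_iff using H in_H \<phi>_eq unfolding dominated_partial_functional_def by simp
  moreover have "\<phi> x \<le> p x" for x
    using H in_H unfolding dominated_partial_functional_def by blast
  moreover have "\<forall>(x, b) \<in> G. \<phi> x = b"
    using H \<phi>_eq unfolding dominated_partial_functional_def by blast
  ultimately show ?thesis by blast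
qed

theorem Hahn_Banach_sublinear:
  fixes p :: "'a::real_vector \<Rightarrow> real"
  assumes padd: "\<And>x y. p (x + y) \<le> p x + p y"
    and phom: "\<And>c x. c \<ge> 0 \<Longrightarrow> p (c *\<^sub>R x) = c * p x"
  shows "\<exists>\<phi>. linear \<phi> \<and> (\<forall>x. \<phi> x \<le> p x) \<and> \<phi> z = p z"
proof -
  define G where "G = {(t *\<^sub>R z, t * p z) | t. True}"
  define A where "A = {H. dominated_partial_functional p G H}"
  have "G \<in> A" unfolding A_def using dominated_partial_functional_line[OF padd phom G_def] by simp
  have "\<exists>U\<in>A. \<forall>X\<in>C. X \<subseteq> U" if C: "C \<in> chains A" for C
  proof (cases "C = {}")
    case True
    then show ?thesis using \<open>G \<in> A\<close> by blast
  next
    case False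
    have "\<Union>C \<in> A"
      unfolding A_def using C False
      by (intro CollectI dominated_partial_functional_Union) (auto simp: chains_def chain_subset_def A_def)
    then show ?thesis by blast
  qed
  then obtain M where "M \<in> A" and maximal: "\<forall>X\<in>A. M \<subseteq> X \<longrightarrow> X = M"
    using Zorn_Lemma2[of A] by blast
  then have M: "dominated_partial_functional p G M" unfolding A_def by blast
  have "(0 *\<^sub>R z, 0 * p z) \<in> G" unfolding G_def by blast
  then have M0: "(0, 0) \<in> M" using M unfolding dominated_partial_functional_def by auto
  have "\<exists>b. (x, b) \<in> M" for x
    using dominated_partial_functional_extend[OF padd phom M M0] maximal unfolding A_def by blast
  then obtain \<phi> where "linear \<phi>" "\<forall>x. \<phi> x \<le> p x" "\<forall>(x, b) \<in> G. \<phi> x = b"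
    using dominated_partial_functional_total[OF M] by blast
  moreover have "(1 *\<^sub>R z, 1 * p z) \<in> G" unfolding G_def by blast
  ultimately show ?thesis by auto
qed

lemma linear_dominated_by_norm_blinfun:
  fixes \<phi> :: "'a::real_normed_vector \<Rightarrow> real"
  assumes "linear \<phi>" and "\<And>x. \<phi> x \<le> norm x"
  shows "blinfun_apply (Blinfun \<phi>) = \<phi>" and "norm (Blinfun \<phi>) \<le> 1"
proof -
  interpret linear \<phi> by fact
  have bound: "norm (\<phi> x) \<le> norm x * 1" for x
    using assms(2)[of x] assms(2)[of "- x"] by (auto simp: neg)
  then have "bounded_linear \<phi>" by (intro bounded_linear_intro[OF add scale])
  then show apply_eq: "blinfun_apply (Blinfun \<phi>) = \<phi>" by (rule bounded_linear_Blinfun_apply)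
  show "norm (Blinfun \<phi>) \<le> 1" by (rule norm_blinfun_bound) (use bound apply_eq in auto)
qed

lemma norming_functional_exists:
  fixes z :: "'a::real_normed_vector"
  assumes "z \<noteq> 0"
  obtains \<Phi> :: "'a \<Rightarrow>\<^sub>L real" where "norm \<Phi> = 1" and "\<Phi> z = norm z"
proof -
  obtain \<phi> where "linear \<phi>" "\<And>x. \<phi> x \<le> norm x" "\<phi> z = norm z"
    using Hahn_Banach_sublinear[of norm, OF norm_triangle_ineq] by auto
  then have apply_eq: "blinfun_apply (Blinfun \<phi>) = \<phi>" and "norm (Blinfun \<phi>) \<le> 1"
    using linear_dominated_by_norm_blinfun by blast+
  moreover have "norm z \<le> norm (Blinfun \<phi>) * norm z"
    using norm_blinfun[of "Blinfun \<phi>" z] apply_eq \<open>\<phi> z = norm z\<close> by simp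
  ultimately show ?thesis using that assms apply_eq \<open>\<phi> z = norm z\<close> by auto
qed

section \<open>One-sided derivative of the norm\<close>

(* The difference quotients decrease as s decreases to 0, so this infimum is the one-sided
   directional derivative of the norm at y. *)
definition norm_dir_deriv :: "'a::real_normed_vector \<Rightarrow> 'a \<Rightarrow> real" where
  "norm_dir_deriv y x = Inf {(norm (y + s *\<^sub>R x) - norm y) / s | s. s > 0}"

lemma norm_diff_quotient_mono:
  fixes x y :: "'a::real_normed_vector"
  assumes "0 < s" "s \<le> r"
  shows "(norm (y + s *\<^sub>R x) - norm y) / s \<le> (norm (y + r *\<^sub>R x) - norm y) / r"
proof -
  have r: "r > 0" using assms by linarith
  have "y + s *\<^sub>R x = (1 - s / r) *\<^sub>R y + (s / r) *\<^sub>R (y + r *\<^sub>R x)"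
    using r by (simp add: algebra_simps)
  then have "norm (y + s *\<^sub>R x) \<le> norm ((1 - s / r) *\<^sub>R y) + norm ((s / r) *\<^sub>R (y + r *\<^sub>R x))"
    by (metis norm_triangle_ineq)
  also have "\<dots> = (1 - s / r) * norm y + (s / r) * norm (y + r *\<^sub>R x)"
    using assms r by simp
  finally have "norm (y + s *\<^sub>R x) - norm y \<le> s * ((norm (y + r *\<^sub>R x) - norm y) / r)"
    using r by (simp add: field_simps)
  then show ?thesis using assms by (simp add: pos_divide_le_eq mult.commute)
qed

lemma norm_diff_quotient_ge:
  fixes x y :: "'a::real_normed_vector"
  assumes "s > 0"
  shows "- norm x \<le> (norm (y + s *\<^sub>R x) - norm y) / s"
proof -
  have "norm y \<le> norm (y + s *\<^sub>R x) + norm (s *\<^sub>R x)"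
    by (metis add_diff_cancel norm_triangle_ineq4)
  then have "- norm x * s \<le> norm (y + s *\<^sub>R x) - norm y"
    using mult.commute[of s "norm x"] assms by simp
  then show ?thesis using assms by (simp add: pos_le_divide_eq)
qed

lemma norm_dir_deriv_le:
  assumes "s > 0"
  shows "norm_dir_deriv y x \<le> (norm (y + s *\<^sub>R x) - norm y) / s"
  unfolding norm_dir_deriv_def
  by (rule cInf_lower) (use assms norm_diff_quotient_ge in \<open>auto simp: bdd_below_def\<close>)

lemma norm_dir_deriv_greatest:
  assumes "\<And>s. s > 0 \<Longrightarrow> c \<le> (norm (y + s *\<^sub>R x) - norm y) / s"
  shows "c \<le> norm_dir_deriv y x"
  unfolding norm_dir_deriv_def by (rule cInf_greatest) (use assms in \<open>auto intro: exI[of _ 1]\<close>)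

lemma norm_dir_deriv_approx:
  assumes "e > 0"
  shows "\<exists>s>0. (norm (y + s *\<^sub>R x) - norm y) / s < norm_dir_deriv y x + e"
  using norm_dir_deriv_greatest[of "norm_dir_deriv y x + e" y x] assms by force

lemma norm_dir_deriv_scaleR:
  assumes "c \<ge> 0"
  shows "norm_dir_deriv y (c *\<^sub>R x) = c * norm_dir_deriv y x"
proof (cases "c = 0")
  case True
  then show ?thesis
    using norm_dir_deriv_le[of 1 y 0] norm_dir_deriv_greatest[of 0 y 0] by simp
next
  case False
  then have c: "c > 0" using assms by simp
  have quotient: "(norm (y + s *\<^sub>R (c *\<^sub>R x)) - norm y) / s
      = c * ((norm (y + (c * s) *\<^sub>R x) - norm y) / (c * s))" if "s > 0" for s
    using c that by (simp add: field_simps)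
  have "norm_dir_deriv y (c *\<^sub>R x) / c \<le> norm_dir_deriv y x"
  proof (rule norm_dir_deriv_greatest)
    fix s :: real assume "s > 0"
    then have "norm_dir_deriv y (c *\<^sub>R x) \<le> c * ((norm (y + s *\<^sub>R x) - norm y) / s)"
      using norm_dir_deriv_le[of "s / c" y "c *\<^sub>R x"] quotient[of "s / c"] c by (simp add: mult.commute)
    then have "norm_dir_deriv y (c *\<^sub>R x) / c \<le> c * ((norm (y + s *\<^sub>R x) - norm y) / s) / c"
      using c by (intro divide_right_mono) auto
    then show "norm_dir_deriv y (c *\<^sub>R x) / c \<le> (norm (y + s *\<^sub>R x) - norm y) / s"
      using c by simp
  qed
  moreover have "c * norm_dir_deriv y x \<le> norm_dir_deriv y (c *\<^sub>R x)"
  proof (rule norm_dir_deriv_greatest)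
    fix s :: real assume "s > 0"
    then have "c * norm_dir_deriv y x \<le> c * ((norm (y + (c * s) *\<^sub>R x) - norm y) / (c * s))"
      using norm_dir_deriv_le[of "c * s" y x] c by (intro mult_left_mono) auto
    also have "\<dots> = (norm (y + s *\<^sub>R (c *\<^sub>R x)) - norm y) / s"
      using quotient[OF \<open>s > 0\<close>] by simp
    finally show "c * norm_dir_deriv y x \<le> (norm (y + s *\<^sub>R (c *\<^sub>R x)) - norm y) / s" .
  qed
  ultimately show ?thesis using c by (simp add: divide_le_eq mult.commute)
qed

lemma norm_dir_deriv_add:
  "norm_dir_deriv y (x + z) \<le> norm_dir_deriv y x + norm_dir_deriv y z"
proof -
  define q where "q v s = (norm (y + s *\<^sub>R v) - norm y) / s" for v s
  have midpoint: "q (x + z) (s / 2) \<le> q x s + q z s" if "s > 0" for s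
  proof -
    have "y + (s / 2) *\<^sub>R (x + z) = (1 / 2) *\<^sub>R (y + s *\<^sub>R x) + (1 / 2) *\<^sub>R (y + s *\<^sub>R z)"
      by (simp add: algebra_simps flip: scaleR_add_left)
    then have "norm (y + (s / 2) *\<^sub>R (x + z))
        \<le> norm ((1 / 2) *\<^sub>R (y + s *\<^sub>R x)) + norm ((1 / 2) *\<^sub>R (y + s *\<^sub>R z))"
      by (simp only: norm_triangle_ineq)
    then have "norm (y + (s / 2) *\<^sub>R (x + z)) \<le> norm (y + s *\<^sub>R x) / 2 + norm (y + s *\<^sub>R z) / 2"
      by simp
    then have "2 * (norm (y + (s / 2) *\<^sub>R (x + z)) - norm y) / s
        \<le> ((norm (y + s *\<^sub>R x) - norm y) + (norm (y + s *\<^sub>R z) - norm y)) / s"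
      using that by (intro divide_right_mono) auto
    moreover have "q (x + z) (s / 2) = 2 * (norm (y + (s / 2) *\<^sub>R (x + z)) - norm y) / s"
      unfolding q_def by (simp add: mult.commute)
    moreover have "q x s + q z s = ((norm (y + s *\<^sub>R x) - norm y) + (norm (y + s *\<^sub>R z) - norm y)) / s"
      unfolding q_def by (simp only: add_divide_distrib)
    ultimately show ?thesis by simp
  qed
  have "norm_dir_deriv y (x + z) - q z s' \<le> q x s" if "s > 0" "s' > 0" for s s'
  proof -
    define m where "m = min s s'"
    have "m > 0" "m \<le> s" "m \<le> s'" using that by (auto simp: m_def)
    then have "norm_dir_deriv y (x + z) \<le> q (x + z) (m / 2)"
      unfolding q_def by (intro norm_dir_deriv_le) simp
    also have "\<dots> \<le> q x m + q z m" using midpoint \<open>m > 0\<close> .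
    also have "\<dots> \<le> q x s + q z s'"
      using norm_diff_quotient_mono \<open>m > 0\<close> \<open>m \<le> s\<close> \<open>m \<le> s'\<close> unfolding q_def
      by (intro add_mono) auto
    finally show ?thesis by simp
  qed
  then have "norm_dir_deriv y (x + z) - q z s' \<le> norm_dir_deriv y x" if "s' > 0" for s'
    using that unfolding q_def by (intro norm_dir_deriv_greatest) auto
  then have "norm_dir_deriv y (x + z) - norm_dir_deriv y x \<le> norm_dir_deriv y z"
    unfolding q_def by (intro norm_dir_deriv_greatest) (simp add: algebra_simps)
  then show ?thesis by simp
qed

lemma norm_dir_deriv_le_norm: "norm_dir_deriv y x \<le> norm x"
  using norm_dir_deriv_le[of 1 y x] norm_triangle_ineq[of y x] by simp

lemma norm_dir_deriv_minus_self: "norm_dir_deriv y (- y) \<le> - norm y"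
  using norm_dir_deriv_le[of 1 y "- y"] by simp

lemma smooth_point_norm_dir_deriv:
  fixes y :: "'a::real_normed_vector" and \<psi> :: "'a \<Rightarrow>\<^sub>L real"
  assumes "smooth_point y" and "norm \<psi> = 1" and "\<psi> y = norm y"
  shows "norm_dir_deriv y w = \<psi> w"
proof -
  obtain \<phi> where "linear \<phi>" and \<phi>_le: "\<And>x. \<phi> x \<le> norm_dir_deriv y x"
    and \<phi>_w: "\<phi> w = norm_dir_deriv y w"
    using Hahn_Banach_sublinear[of "norm_dir_deriv y", OF norm_dir_deriv_add norm_dir_deriv_scaleR]
    by blast
  interpret linear \<phi> by fact
  have "\<phi> x \<le> norm x" for x using \<phi>_le[of x] norm_dir_deriv_le_norm[of y x] by linarith
  then have apply_eq: "blinfun_apply (Blinfun \<phi>) = \<phi>" and "norm (Blinfun \<phi>) \<le> 1"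
    using linear_dominated_by_norm_blinfun \<open>linear \<phi>\<close> by blast+
  have "norm y \<le> \<phi> y" using \<phi>_le[of "- y"] norm_dir_deriv_minus_self[of y] neg[of y] by linarith
  moreover have "\<phi> y \<le> norm y" using \<open>\<And>x. \<phi> x \<le> norm x\<close> .
  ultimately have \<phi>_y: "\<phi> y = norm y" by simp
  moreover have "y \<noteq> 0" using assms(1) unfolding smooth_point_def by blast
  ultimately have "norm (Blinfun \<phi>) = 1"
    using \<open>norm (Blinfun \<phi>) \<le> 1\<close> norm_blinfun[of "Blinfun \<phi>" y] apply_eq by simp
  then have "Blinfun \<phi> = \<psi>"
    using assms \<phi>_y apply_eq unfolding smooth_point_def by auto
  then show ?thesis using apply_eq \<phi>_w by simp
qed

lemma smooth_point_norm_add_le: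
  fixes y :: "'a::real_normed_vector" and \<psi> :: "'a \<Rightarrow>\<^sub>L real"
  assumes "smooth_point y" and "norm \<psi> = 1" and "\<psi> y = norm y" and "\<eta> > 0"
  shows "\<exists>s>0. norm (y + s *\<^sub>R w) \<le> norm y + s * (\<psi> w + \<eta>)"
proof -
  obtain s where "s > 0" and "(norm (y + s *\<^sub>R w) - norm y) / s < norm_dir_deriv y w + \<eta>"
    using norm_dir_deriv_approx[OF \<open>\<eta> > 0\<close>] by blast
  then show ?thesis
    using smooth_point_norm_dir_deriv[OF assms(1-3)] by (auto simp: divide_less_eq algebra_simps)
qed

section \<open>Norming functionals of compact operators\<close>

lemma compact_opsI:
  fixes S :: "'a::real_normed_vector \<Rightarrow>\<^sub>L 'b::real_normed_vector"
  assumes "compact C" and "S ` cball 0 1 \<subseteq> C"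
  shows "S \<in> compact_ops"
proof -
  have "closure (S ` cball 0 1) \<subseteq> C"
    using assms by (simp add: closure_minimal compact_imp_closed)
  then have "closure (S ` cball 0 1) = C \<inter> closure (S ` cball 0 1)" by blast
  moreover have "compact (C \<inter> closure (S ` cball 0 1))"
    using assms(1) by (rule compact_Int_closed) simp
  ultimately show ?thesis unfolding compact_ops_def by simp
qed

lemma compact_ops_add:
  fixes S R :: "'a::real_normed_vector \<Rightarrow>\<^sub>L 'b::real_normed_vector"
  assumes "S \<in> compact_ops" and "R \<in> compact_ops"
  shows "S + R \<in> compact_ops"
proof (rule compact_opsI)
  let ?C = "{x + y | x y. x \<in> closure (S ` cball 0 1) \<and> y \<in> closure (R ` cball 0 1)}"
  show "compact ?C" using assms unfolding compact_ops_def by (intro compact_sums) auto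
  show "(S + R) ` cball 0 1 \<subseteq> ?C"
    by (auto simp: blinfun.add_left intro!: closure_subset[THEN subsetD])
qed

lemma compact_ops_scaleR:
  fixes S :: "'a::real_normed_vector \<Rightarrow>\<^sub>L 'b::real_normed_vector"
  assumes "S \<in> compact_ops"
  shows "c *\<^sub>R S \<in> compact_ops"
proof (rule compact_opsI)
  let ?C = "(\<lambda>y. c *\<^sub>R y) ` closure (S ` cball 0 1)"
  show "compact ?C" using assms unfolding compact_ops_def
    by (intro compact_continuous_image continuous_intros) auto
  show "(c *\<^sub>R S) ` cball 0 1 \<subseteq> ?C"
    by (auto simp: blinfun.scaleR_left intro!: imageI closure_subset[THEN subsetD])
qed

lemma compact_ops_rank_one:
  fixes \<phi> :: "'a::real_normed_vector \<Rightarrow>\<^sub>L real" and y :: "'b::real_normed_vector"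
  shows "blinfun_scaleR_left y o\<^sub>L \<phi> \<in> compact_ops"
proof (rule compact_opsI)
  show "compact ((\<lambda>c. c *\<^sub>R y) ` cball 0 (norm \<phi>))"
    by (intro compact_continuous_image continuous_intros) auto
  have "norm (\<phi> x) \<le> norm \<phi>" if "norm x \<le> 1" for x
    using norm_blinfun[of \<phi> x] that by (meson mult_left_le norm_ge_zero order_trans)
  then show "(blinfun_scaleR_left y o\<^sub>L \<phi>) ` cball 0 1 \<subseteq> (\<lambda>c. c *\<^sub>R y) ` cball 0 (norm \<phi>)"
    by auto
qed

lemma bounded_linear_on_evaluation:
  fixes \<psi> :: "'b::real_normed_vector \<Rightarrow>\<^sub>L real" and u :: "'a::real_normed_vector"
  shows "bounded_linear_on S (\<lambda>R :: 'a \<Rightarrow>\<^sub>L 'b. \<psi> (R u))"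
  unfolding bounded_linear_on_def
proof (intro conjI ballI allI exI)
  fix R :: "'a \<Rightarrow>\<^sub>L 'b"
  have "\<bar>\<psi> (R u)\<bar> \<le> norm \<psi> * norm (R u)"
    using norm_blinfun[of \<psi> "R u"] by simp
  also have "\<dots> \<le> norm \<psi> * (norm R * norm u)"
    using norm_blinfun[of R u] by (intro mult_left_mono) auto
  finally show "\<bar>\<psi> (R u)\<bar> \<le> (norm \<psi> * norm u) * norm R" by (simp add: ac_simps)
qed (simp_all add: blinfun.add_left blinfun.add_right blinfun.scaleR_left blinfun.scaleR_right)

lemma dual_norm_on_evaluation:
  fixes \<psi> :: "'b::real_normed_vector \<Rightarrow>\<^sub>L real" and u :: "'a::real_normed_vector"
    and B :: "'a \<Rightarrow>\<^sub>L 'b"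
  assumes "norm \<psi> \<le> 1" and "norm u \<le> 1"
    and "B \<in> S" and "norm B \<le> 1" and "\<psi> (B u) = 1"
  shows "dual_norm_on S (\<lambda>R :: 'a \<Rightarrow>\<^sub>L 'b. \<psi> (R u)) = 1"
  unfolding dual_norm_on_def
proof (rule cSup_eq_maximum)
  show "1 \<in> {\<bar>\<psi> (blinfun_apply R u)\<bar> | R. R \<in> S \<and> norm R \<le> 1}"
    using assms(3-5) by force
next
  fix r assume "r \<in> {\<bar>\<psi> (blinfun_apply R u)\<bar> | R. R \<in> S \<and> norm R \<le> 1}"
  then obtain R :: "'a \<Rightarrow>\<^sub>L 'b" where "r = \<bar>\<psi> (R u)\<bar>" "norm R \<le> 1" by blast
  moreover have "\<bar>\<psi> (R u)\<bar> \<le> norm \<psi> * norm (R u)"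
    using norm_blinfun[of \<psi> "R u"] by simp
  moreover have "norm \<psi> * norm (R u) \<le> 1 * (norm R * norm u)"
    using assms(1) norm_blinfun[of R u] by (intro mult_mono) auto
  moreover have "norm R * norm u \<le> 1"
    using assms(2) \<open>norm R \<le> 1\<close> by (simp add: mult_le_one)
  ultimately show "r \<le> 1" by linarith
qed

lemma abs_le_dual_norm_on:
  fixes g :: "'v::real_normed_vector \<Rightarrow> real"
  assumes scale: "\<And>c a. a \<in> S \<Longrightarrow> c *\<^sub>R a \<in> S"
    and g: "bounded_linear_on S g" and "a \<in> S"
  shows "\<bar>g a\<bar> \<le> dual_norm_on S g * norm a"
proof (cases "a = 0")
  case True
  have "g a = g (0 *\<^sub>R a)" using True by simp
  also have "\<dots> = 0 * g a" using g \<open>a \<in> S\<close> unfolding bounded_linear_on_def by blast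
  finally show ?thesis using True by simp
next
  case False
  from g obtain K where K: "\<And>b. b \<in> S \<Longrightarrow> \<bar>g b\<bar> \<le> K * norm b"
    unfolding bounded_linear_on_def by blast
  have "bdd_above {\<bar>g b\<bar> | b. b \<in> S \<and> norm b \<le> 1}"
  proof (rule bdd_aboveI)
    fix r assume "r \<in> {\<bar>g b\<bar> | b. b \<in> S \<and> norm b \<le> 1}"
    then obtain b where "r = \<bar>g b\<bar>" "b \<in> S" "norm b \<le> 1" by blast
    have "K * norm b \<le> \<bar>K\<bar> * norm b" by (intro mult_right_mono) auto
    also have "\<dots> \<le> \<bar>K\<bar>" using \<open>norm b \<le> 1\<close> by (simp add: mult_left_le)
    finally show "r \<le> \<bar>K\<bar>" using K[OF \<open>b \<in> S\<close>] \<open>r = \<bar>g b\<bar>\<close> by linarith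
  qed
  moreover have "(1 / norm a) *\<^sub>R a \<in> S" "norm ((1 / norm a) *\<^sub>R a) \<le> 1"
    using scale \<open>a \<in> S\<close> False by auto
  ultimately have "\<bar>g ((1 / norm a) *\<^sub>R a)\<bar> \<le> dual_norm_on S g"
    unfolding dual_norm_on_def by (intro cSup_upper) auto
  moreover have "g ((1 / norm a) *\<^sub>R a) = g a / norm a"
    using g \<open>a \<in> S\<close> unfolding bounded_linear_on_def by simp
  ultimately show ?thesis using False by (simp add: abs_div divide_le_eq)
qed

lemma smooth_point_on_compact_ops_norming_points:
  fixes A :: "'a::real_normed_vector \<Rightarrow>\<^sub>L 'b::real_normed_vector"
  assumes A: "smooth_point_on compact_ops A" and "norm A = 1"
    and u: "norm u = 1" "norm (A u) = 1"
    and v: "norm v = 1" "norm (A v) = 1"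
  shows "v = u \<or> v = - u"
proof -
  have "A u \<noteq> 0" "A v \<noteq> 0" using u v by auto
  obtain \<psi>u :: "'b \<Rightarrow>\<^sub>L real" where \<psi>u: "norm \<psi>u = 1" "\<psi>u (A u) = norm (A u)"
    using norming_functional_exists[OF \<open>A u \<noteq> 0\<close>] by blast
  obtain \<psi>v :: "'b \<Rightarrow>\<^sub>L real" where \<psi>v: "norm \<psi>v = 1" "\<psi>v (A v) = norm (A v)"
    using norming_functional_exists[OF \<open>A v \<noteq> 0\<close>] by blast
  obtain f where unique: "\<And>g. bounded_linear_on compact_ops g \<and> dual_norm_on compact_ops g = 1
      \<and> g A = norm A \<Longrightarrow> \<forall>R\<in>compact_ops. g R = f R"
    and "A \<in> compact_ops"
    using A unfolding smooth_point_on_def by blast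
  have "\<forall>R\<in>compact_ops. \<psi>u (blinfun_apply R u) = f R"
    by (intro unique conjI bounded_linear_on_evaluation dual_norm_on_evaluation[OF _ _ \<open>A \<in> compact_ops\<close>])
      (use \<psi>u u \<open>norm A = 1\<close> in simp_all)
  moreover have "\<forall>R\<in>compact_ops. \<psi>v (blinfun_apply R v) = f R"
    by (intro unique conjI bounded_linear_on_evaluation dual_norm_on_evaluation[OF _ _ \<open>A \<in> compact_ops\<close>])
      (use \<psi>v v \<open>norm A = 1\<close> in simp_all)
  ultimately have same: "\<psi>u (R u) = \<psi>v (R v)" if "R \<in> compact_ops" for R
    using that by simp
  define \<sigma> where "\<sigma> = \<psi>v (A u)"
  have annihilated: "\<phi> (u - \<sigma> *\<^sub>R v) = 0" for \<phi> :: "'a \<Rightarrow>\<^sub>L real"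
  proof -
    have "\<psi>u (\<phi> u *\<^sub>R A u) = \<psi>v (\<phi> v *\<^sub>R A u)"
      using same[OF compact_ops_rank_one[of "A u" \<phi>]] by simp
    then have "\<phi> u = \<phi> v * \<sigma>"
      using \<psi>u u by (simp add: \<sigma>_def blinfun.scaleR_right)
    then show ?thesis by (simp add: blinfun.diff_right blinfun.scaleR_right)
  qed
  have "u - \<sigma> *\<^sub>R v = 0"
  proof (rule ccontr)
    assume "u - \<sigma> *\<^sub>R v \<noteq> 0"
    then obtain \<Phi> :: "'a \<Rightarrow>\<^sub>L real" where "\<Phi> (u - \<sigma> *\<^sub>R v) = norm (u - \<sigma> *\<^sub>R v)"
      using norming_functional_exists by blast
    then show False using annihilated[of \<Phi>] \<open>u - \<sigma> *\<^sub>R v \<noteq> 0\<close> by simp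
  qed
  then have "u = \<sigma> *\<^sub>R v" by simp
  then have "\<bar>\<sigma>\<bar> = 1" using u(1) v(1) by simp
  then have "\<sigma> = 1 \<or> \<sigma> = - 1" by linarith
  then show ?thesis using \<open>u = \<sigma> *\<^sub>R v\<close> by auto
qed

section \<open>Almost norming vectors\<close>

definition almost_norming_near ::
    "('a::real_normed_vector \<Rightarrow>\<^sub>L 'b::real_normed_vector) \<Rightarrow> real \<Rightarrow> 'a \<Rightarrow> real \<Rightarrow> bool" where
  "almost_norming_near T \<delta> u \<epsilon> \<longleftrightarrow>
     (\<forall>x. norm x = 1 \<and> norm (T x) > 1 - \<delta> \<longrightarrow> norm (x - u) < \<epsilon> \<or> norm (x + u) < \<epsilon>)"

lemma norm_blinfun_le_unit:
  fixes F :: "'a::real_normed_vector \<Rightarrow>\<^sub>L 'b::real_normed_vector"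
  assumes unit: "\<And>x. norm x = 1 \<Longrightarrow> norm (F x) \<le> B" and "0 \<le> B"
  shows "norm F \<le> B"
proof (rule norm_blinfun_bound[OF \<open>0 \<le> B\<close>])
  fix x :: 'a
  show "norm (F x) \<le> B * norm x"
  proof (cases "x = 0")
    case False
    then have "norm (F ((1 / norm x) *\<^sub>R x)) \<le> B" using unit by simp
    then show ?thesis using False by (simp add: blinfun.scaleR_right field_simps)
  qed simp
qed

lemma exists_almost_norming_point:
  fixes T :: "'a::real_normed_vector \<Rightarrow>\<^sub>L 'b::real_normed_vector"
  assumes "norm T = 1" and "\<delta> > 0"
  shows "\<exists>x. norm x = 1 \<and> norm (T x) > 1 - \<delta>"
proof (rule ccontr)
  assume "\<not> ?thesis"
  then have "norm (T x) \<le> max (1 - \<delta>) 0" if "norm x = 1" for x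
    using that by (meson le_max_iff_disj not_less)
  then have "norm T \<le> max (1 - \<delta>) 0"
    by (rule norm_blinfun_le_unit) auto
  then show False using assms by simp
qed

lemma almost_norming_sequence:
  fixes T :: "'a::real_normed_vector \<Rightarrow>\<^sub>L 'b::real_normed_vector"
  assumes "norm T = 1"
  obtains y where "\<And>n. norm (y n) = 1" and "(\<lambda>n. norm (T (y n))) \<longlonglongrightarrow> 1"
proof -
  have "\<forall>n. \<exists>x. norm x = 1 \<and> norm (T x) > 1 - 1 / real (Suc n)"
    using exists_almost_norming_point[OF assms] by simp
  from choice[OF this] obtain y
    where "\<forall>n. norm (y n) = 1 \<and> norm (T (y n)) > 1 - 1 / real (Suc n)"
    by blast
  then have y: "\<And>n. norm (y n) = 1" "\<And>n. norm (T (y n)) > 1 - 1 / real (Suc n)"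
    by auto
  have lim: "(\<lambda>n. 1 - 1 / real (Suc n)) \<longlonglongrightarrow> 1"
    using tendsto_diff[OF tendsto_const LIMSEQ_inverse_real_of_nat] by (simp add: inverse_eq_divide)
  have "(\<lambda>n. norm (T (y n))) \<longlonglongrightarrow> 1"
  proof (rule tendsto_sandwich[OF _ _ lim tendsto_const])
    show "\<forall>\<^sub>F n in sequentially. 1 - 1 / real (Suc n) \<le> norm (T (y n))"
      using y(2) by (intro always_eventually allI less_imp_le)
    show "\<forall>\<^sub>F n in sequentially. norm (T (y n)) \<le> 1"
      using norm_blinfun[of T] assms y(1) by (intro always_eventually allI) (metis mult_1_right)
  qed
  then show ?thesis using that y(1) by blast
qed

lemma almost_norming_sequence_totally_bounded:
  fixes T :: "'a::real_normed_vector \<Rightarrow>\<^sub>L 'b::real_normed_vector"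
  assumes near: "\<And>\<epsilon>. \<epsilon> > 0 \<Longrightarrow> \<exists>\<delta>>0. \<exists>u. almost_norming_near T \<delta> u \<epsilon>"
    and y: "\<And>n. norm (y n) = 1" and lim: "(\<lambda>n. norm (T (y n))) \<longlonglongrightarrow> 1" and "\<epsilon> > 0"
  shows "\<exists>k. finite k \<and> closure (range y) \<subseteq> (\<Union>x\<in>k. ball x \<epsilon>)"
proof -
  obtain \<delta> u where "\<delta> > 0" and u: "almost_norming_near T \<delta> u (\<epsilon> / 2)"
    using near \<open>\<epsilon> > 0\<close> by (meson half_gt_zero)
  obtain N where N: "\<And>n. n \<ge> N \<Longrightarrow> norm (T (y n)) > 1 - \<delta>"
    using order_tendstoD(1)[OF lim, of "1 - \<delta>"] \<open>\<delta> > 0\<close> by (auto simp: eventually_sequentially)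
  define k where "k = {u, - u} \<union> y ` {..<N}"
  have "y n \<in> (\<Union>x\<in>k. cball x (\<epsilon> / 2))" for n
  proof (cases "n < N")
    case True
    then have "y n \<in> k" by (simp add: k_def)
    then show ?thesis using \<open>\<epsilon> > 0\<close> by (intro UN_I[of "y n"]) auto
  next
    case False
    then have "norm (T (y n)) > 1 - \<delta>" using N by simp
    then have close: "norm (y n - u) < \<epsilon> / 2 \<or> norm (y n + u) < \<epsilon> / 2"
      using u y[of n] unfolding almost_norming_near_def by blast
    have dist_u: "dist u (y n) = norm (y n - u)" and dist_minus_u: "dist (- u) (y n) = norm (y n + u)"
      by (subst dist_commute, simp add: dist_norm)+
    have "u \<in> k" "- u \<in> k" by (simp_all add: k_def)
    from close show ?thesis
    proof
      assume "norm (y n - u) < \<epsilon> / 2"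
      then show ?thesis using \<open>u \<in> k\<close> dist_u by (intro UN_I[of u]) auto
    next
      assume "norm (y n + u) < \<epsilon> / 2"
      then show ?thesis using \<open>- u \<in> k\<close> dist_minus_u by (intro UN_I[of "- u"]) auto
    qed
  qed
  then have "range y \<subseteq> (\<Union>x\<in>k. cball x (\<epsilon> / 2))" by blast
  moreover have "closed (\<Union>x\<in>k. cball x (\<epsilon> / 2))" by (intro closed_UN) (auto simp: k_def)
  ultimately have "closure (range y) \<subseteq> (\<Union>x\<in>k. cball x (\<epsilon> / 2))"
    by (rule closure_minimal)
  also have "\<dots> \<subseteq> (\<Union>x\<in>k. ball x \<epsilon>)" using \<open>\<epsilon> > 0\<close> by auto
  finally have "closure (range y) \<subseteq> (\<Union>x\<in>k. ball x \<epsilon>)" .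
  moreover have "finite k" by (simp add: k_def)
  ultimately show ?thesis by blast
qed

lemma norm_attained_if_almost_norming_near:
  fixes T :: "'a::banach \<Rightarrow>\<^sub>L 'b::real_normed_vector"
  assumes "norm T = 1" and near: "\<And>\<epsilon>. \<epsilon> > 0 \<Longrightarrow> \<exists>\<delta>>0. \<exists>u. almost_norming_near T \<delta> u \<epsilon>"
  obtains x0 where "norm x0 = 1" and "norm (T x0) = 1"
proof -
  obtain y where y: "\<And>n. norm (y n) = 1" and lim: "(\<lambda>n. norm (T (y n))) \<longlonglongrightarrow> 1"
    using almost_norming_sequence[OF \<open>norm T = 1\<close>] by blast
  have "compact (closure (range y))"
    unfolding compact_eq_totally_bounded
    using almost_norming_sequence_totally_bounded[OF near y lim] by (simp add: complete_eq_closed)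
  then have "seq_compact (closure (range y))" by (rule compact_imp_seq_compact)
  moreover have "\<forall>n. y n \<in> closure (range y)" by (intro allI closure_subset[THEN subsetD] rangeI)
  ultimately obtain l r where "l \<in> closure (range y)" "strict_mono r" and ylim: "(y \<circ> r) \<longlonglongrightarrow> l"
    by (rule seq_compactE)
  have "(\<lambda>n. norm ((y \<circ> r) n)) \<longlonglongrightarrow> norm l" by (intro tendsto_norm ylim)
  then have "norm l = 1" using y by (simp add: LIMSEQ_const_iff)
  have "(\<lambda>n. norm (T ((y \<circ> r) n))) \<longlonglongrightarrow> norm (T l)"
    by (intro tendsto_norm bounded_linear.tendsto[OF blinfun.bounded_linear_right] ylim)
  moreover have "(\<lambda>n. norm (T ((y \<circ> r) n))) \<longlonglongrightarrow> 1"
    using LIMSEQ_subseq_LIMSEQ[OF lim \<open>strict_mono r\<close>] by (simp add: comp_def)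
  ultimately have "norm (T l) = 1" by (rule LIMSEQ_unique)
  then show ?thesis using that \<open>norm l = 1\<close> by blast
qed

lemma uniform_BPB_approx_almost_norming_near:
  fixes T A :: "'a::real_normed_vector \<Rightarrow>\<^sub>L 'b::real_normed_vector"
  assumes "norm T = 1" and "uniform_BPB_approx T \<epsilon> A" and A: "smooth_point_on compact_ops A"
  shows "\<exists>\<delta>>0. \<exists>u. almost_norming_near T \<delta> u \<epsilon>"
proof -
  obtain \<delta> where "norm A = 1" and "\<delta> > 0" and bpb: "\<And>x. norm x = 1 \<and> norm (T x) > 1 - \<delta> \<Longrightarrow>
      \<exists>u. norm u = 1 \<and> norm (A u) = 1 \<and> norm (u - x) < \<epsilon> \<and> norm (A - T) < \<epsilon>"
    using assms(2) unfolding uniform_BPB_approx_def by blast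
  obtain x1 where "norm x1 = 1" "norm (T x1) > 1 - \<delta>"
    using exists_almost_norming_point[OF \<open>norm T = 1\<close> \<open>\<delta> > 0\<close>] by blast
  then obtain u0 where u0: "norm u0 = 1" "norm (A u0) = 1" using bpb by blast
  have "norm (x - u0) < \<epsilon> \<or> norm (x + u0) < \<epsilon>" if x: "norm x = 1" "norm (T x) > 1 - \<delta>" for x
  proof -
    obtain u where u: "norm u = 1" "norm (A u) = 1" "norm (u - x) < \<epsilon>" using bpb[of x] x by blast
    have "u = u0 \<or> u = - u0"
      by (rule smooth_point_on_compact_ops_norming_points[OF A \<open>norm A = 1\<close> u0 u(1,2)])
    then show ?thesis
    proof
      assume "u = u0"
      then show ?thesis using u(3) by (simp add: norm_minus_commute)
    next
      assume "u = - u0"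
      then have "x + u0 = - (u - x)" by simp
      then have "norm (x + u0) < \<epsilon>" using u(3) by (simp only: norm_minus_cancel)
      then show ?thesis ..
    qed
  qed
  then show ?thesis using \<open>\<delta> > 0\<close> unfolding almost_norming_near_def by blast
qed

lemma almost_norming_near_norming_point:
  fixes T :: "'a::real_normed_vector \<Rightarrow>\<^sub>L 'b::real_normed_vector"
  assumes near: "\<And>\<epsilon>. \<epsilon> > 0 \<Longrightarrow> \<exists>\<delta>>0. \<exists>u. almost_norming_near T \<delta> u \<epsilon>"
    and "norm x0 = 1" and "norm (T x0) = 1" and "\<eta> > 0"
  shows "\<exists>\<delta>>0. almost_norming_near T \<delta> x0 \<eta>"
proof -
  obtain \<delta> u where "\<delta> > 0" and u: "almost_norming_near T \<delta> u (\<eta> / 2)"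
    using near \<open>\<eta> > 0\<close> by (meson half_gt_zero)
  have "norm (x - x0) < \<eta> \<or> norm (x + x0) < \<eta>" if "norm x = 1" "norm (T x) > 1 - \<delta>" for x
  proof -
    have "norm (x - u) < \<eta> / 2 \<or> norm (x + u) < \<eta> / 2"
      using u that unfolding almost_norming_near_def by blast
    moreover have "norm (x0 - u) < \<eta> / 2 \<or> norm (x0 + u) < \<eta> / 2"
      using u assms(2,3) \<open>\<delta> > 0\<close> unfolding almost_norming_near_def by simp
    moreover have "norm (x - x0) \<le> norm (x - u) + norm (x0 - u)"
      "norm (x - x0) \<le> norm (x + u) + norm (x0 + u)"
      "norm (x + x0) \<le> norm (x - u) + norm (x0 + u)"
      "norm (x + x0) \<le> norm (x + u) + norm (x0 - u)"
      using norm_triangle_ineq4[of "x - u" "x0 - u"] norm_triangle_ineq4[of "x + u" "x0 + u"]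
        norm_triangle_ineq[of "x - u" "x0 + u"] norm_triangle_ineq[of "x + u" "x0 - u"]
      by (simp_all add: algebra_simps)
    ultimately show ?thesis by linarith
  qed
  then show ?thesis using \<open>\<delta> > 0\<close> unfolding almost_norming_near_def by blast
qed

section \<open>Norm perturbations and smoothness\<close>

lemma norm_perturbation_near_le:
  fixes T S :: "'a::real_normed_vector \<Rightarrow>\<^sub>L 'b::real_normed_vector"
  assumes "norm T \<le> 1" and "norm x \<le> 1" and "norm (x - x0) \<le> \<rho>" and "0 < t" and "t \<le> s"
    and at_x0: "norm (T x0 + s *\<^sub>R S x0) \<le> 1 + s * b"
  shows "norm (T x + t *\<^sub>R S x) \<le> 1 + t * (b + \<rho> / s + norm S * \<rho>)"
proof -
  have "s > 0" using assms by linarith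
  have Tx: "norm (T x) \<le> 1"
    using norm_blinfun[of T x] assms(1,2) by (meson mult_le_one norm_ge_zero order_trans)
  have "norm T * norm (x - x0) \<le> \<rho>"
    using assms(1,3) by (meson mult_left_le_one_le norm_ge_zero order_trans)
  then have "norm (T (x - x0)) \<le> \<rho>" using norm_blinfun[of T "x - x0"] by linarith
  moreover have "T x + s *\<^sub>R S x0 = (T x0 + s *\<^sub>R S x0) + T (x - x0)"
    by (simp add: blinfun.diff_right)
  then have "norm (T x + s *\<^sub>R S x0) \<le> norm (T x0 + s *\<^sub>R S x0) + norm (T (x - x0))"
    by (metis norm_triangle_ineq)
  ultimately have at_s: "norm (T x + s *\<^sub>R S x0) \<le> 1 + s * b + \<rho>"
    using at_x0 by linarith
  have "(norm (T x + t *\<^sub>R S x0) - norm (T x)) / t \<le> (norm (T x + s *\<^sub>R S x0) - norm (T x)) / s"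
    using norm_diff_quotient_mono \<open>0 < t\<close> \<open>t \<le> s\<close> .
  then have "norm (T x + t *\<^sub>R S x0)
      \<le> (1 - t / s) * norm (T x) + (t / s) * norm (T x + s *\<^sub>R S x0)"
    using \<open>0 < t\<close> \<open>s > 0\<close> by (simp add: field_simps)
  also have "\<dots> \<le> (1 - t / s) * 1 + (t / s) * (1 + s * b + \<rho>)"
    using Tx at_s \<open>0 < t\<close> \<open>t \<le> s\<close> \<open>s > 0\<close> by (intro add_mono mult_left_mono) auto
  also have "\<dots> = 1 + t * (b + \<rho> / s)"
    using \<open>s > 0\<close> by (simp add: field_simps)
  finally have at_t: "norm (T x + t *\<^sub>R S x0) \<le> 1 + t * (b + \<rho> / s)" .
  have "norm (S (x - x0)) \<le> norm S * \<rho>"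
    using norm_blinfun[of S "x - x0"] assms(3) by (meson mult_left_mono norm_ge_zero order_trans)
  then have "norm (t *\<^sub>R S (x - x0)) \<le> t * (norm S * \<rho>)"
    using \<open>0 < t\<close> by (simp add: mult_left_mono)
  moreover have "T x + t *\<^sub>R S x = (T x + t *\<^sub>R S x0) + t *\<^sub>R S (x - x0)"
    by (simp add: blinfun.diff_right algebra_simps)
  then have "norm (T x + t *\<^sub>R S x) \<le> norm (T x + t *\<^sub>R S x0) + norm (t *\<^sub>R S (x - x0))"
    by (metis norm_triangle_ineq)
  ultimately have "norm (T x + t *\<^sub>R S x) \<le> 1 + t * (b + \<rho> / s) + t * (norm S * \<rho>)"
    using at_t by linarith
  then show ?thesis by (simp add: algebra_simps)
qed

lemma norm_blinfun_le_if_almost_norming_near: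
  fixes T F :: "'a::real_normed_vector \<Rightarrow>\<^sub>L 'b::real_normed_vector"
  assumes "almost_norming_near T \<delta> x0 \<rho>"
    and near: "\<And>x. norm x = 1 \<Longrightarrow> norm (x - x0) \<le> \<rho> \<Longrightarrow> norm (F x) \<le> B"
    and far: "\<And>x. norm x = 1 \<Longrightarrow> norm (T x) \<le> 1 - \<delta> \<Longrightarrow> norm (F x) \<le> B"
    and "0 \<le> B"
  shows "norm F \<le> B"
proof (rule norm_blinfun_le_unit[OF _ \<open>0 \<le> B\<close>])
  fix x :: 'a assume "norm x = 1"
  show "norm (F x) \<le> B"
  proof (cases "norm (T x) > 1 - \<delta>")
    case True
    then have "norm (x - x0) < \<rho> \<or> norm (x + x0) < \<rho>"
      using assms(1) \<open>norm x = 1\<close> unfolding almost_norming_near_def by blast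
    moreover have "- x - x0 = - (x + x0)" by simp
    then have "norm (- x - x0) = norm (x + x0)" by (simp only: norm_minus_cancel)
    ultimately show ?thesis
      using near[of x] near[of "- x"] \<open>norm x = 1\<close> by (auto simp: blinfun.minus_right)
  next
    case False
    then show ?thesis using far \<open>norm x = 1\<close> by simp
  qed
qed

lemma norm_perturbation_le:
  fixes T S :: "'a::real_normed_vector \<Rightarrow>\<^sub>L 'b::real_normed_vector" and \<psi> :: "'b \<Rightarrow>\<^sub>L real"
  assumes "norm T = 1" and "norm x0 = 1" and "norm (T x0) = 1"
    and near: "\<And>\<rho>. \<rho> > 0 \<Longrightarrow> \<exists>\<delta>>0. almost_norming_near T \<delta> x0 \<rho>"
    and "smooth_point (T x0)" and "norm \<psi> = 1" and "\<psi> (T x0) = 1" and "\<eta> > 0"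
  shows "\<exists>t>0. norm (T + t *\<^sub>R S) \<le> 1 + t * (\<psi> (S x0) + \<eta>)"
proof -
  define a where "a = \<psi> (S x0)"
  define M where "M = norm S"
  have "M \<ge> 0" by (simp add: M_def)
  have "- M \<le> a"
    using norm_blinfun[of \<psi> "S x0"] norm_blinfun[of S x0] \<open>norm \<psi> = 1\<close> \<open>norm x0 = 1\<close>
    unfolding a_def M_def by (simp add: abs_le_iff)
  have "\<eta> / 3 > 0" "\<psi> (T x0) = norm (T x0)" using assms(3,7,8) by simp_all
  then obtain s where "s > 0" and at_x0: "norm (T x0 + s *\<^sub>R S x0) \<le> 1 + s * (a + \<eta> / 3)"
    using smooth_point_norm_add_le[OF assms(5,6)] assms(3) unfolding a_def by metis
  define \<rho> where "\<rho> = min (s * \<eta> / 3) (\<eta> / (3 * (M + 1)))"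
  have "\<rho> > 0" using \<open>s > 0\<close> \<open>\<eta> > 0\<close> \<open>M \<ge> 0\<close> by (simp add: \<rho>_def)
  have \<rho>_le: "\<rho> \<le> s * \<eta> / 3" "\<rho> \<le> \<eta> / (3 * (M + 1))"
    unfolding \<rho>_def by (rule min.cobounded1, rule min.cobounded2)
  have "\<rho> / s \<le> (s * \<eta> / 3) / s"
    using \<open>s > 0\<close> \<rho>_le(1) by (intro divide_right_mono) auto
  then have "\<rho> / s \<le> \<eta> / 3" using \<open>s > 0\<close> by simp
  have "M * \<rho> \<le> \<eta> / 3"
  proof -
    have "M * \<rho> \<le> (M + 1) * (\<eta> / (3 * (M + 1)))"
      using \<open>M \<ge> 0\<close> \<open>\<eta> > 0\<close> \<open>\<rho> > 0\<close> \<rho>_le(2) by (intro mult_mono) auto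
    also have "\<dots> = \<eta> / 3" using \<open>M \<ge> 0\<close> by (simp add: field_simps)
    finally show ?thesis .
  qed
  obtain \<delta> where "\<delta> > 0" and \<delta>: "almost_norming_near T \<delta> x0 \<rho>" using near[OF \<open>\<rho> > 0\<close>] by blast
  define t where "t = min s (min \<delta> 1 / (2 * M + 1))"
  have "t > 0" "t \<le> s" using \<open>s > 0\<close> \<open>\<delta> > 0\<close> \<open>M \<ge> 0\<close> by (auto simp: t_def)
  have "t \<le> min \<delta> 1 / (2 * M + 1)" unfolding t_def by (rule min.cobounded2)
  then have "t * (2 * M + 1) \<le> min \<delta> 1 / (2 * M + 1) * (2 * M + 1)"
    using \<open>M \<ge> 0\<close> by (intro mult_right_mono) auto
  then have t_small: "t * (2 * M + 1) \<le> \<delta>" "t * (2 * M + 1) \<le> 1" using \<open>M \<ge> 0\<close> by simp_all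
  have "t * (- M) \<le> t * a" using \<open>- M \<le> a\<close> \<open>t > 0\<close> by (intro mult_left_mono) auto
  have "0 \<le> t * \<eta>" using \<open>t > 0\<close> \<open>\<eta> > 0\<close> by simp
  have apply_eq: "(T + t *\<^sub>R S) x = T x + t *\<^sub>R S x" for x
    by (simp add: blinfun.add_left blinfun.scaleR_left)
  have "norm (T + t *\<^sub>R S) \<le> 1 + t * (a + \<eta>)"
  proof (rule norm_blinfun_le_if_almost_norming_near[OF \<delta>])
    fix x :: 'a assume "norm x = 1" "norm (x - x0) \<le> \<rho>"
    then have "norm (T x + t *\<^sub>R S x) \<le> 1 + t * (a + \<eta> / 3 + \<rho> / s + M * \<rho>)"
      using norm_perturbation_near_le[OF _ _ _ \<open>t > 0\<close> \<open>t \<le> s\<close> at_x0] assms(1)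
      unfolding M_def by simp
    moreover have "t * (a + \<eta> / 3 + \<rho> / s + M * \<rho>) \<le> t * (a + \<eta>)"
      using \<open>\<rho> / s \<le> \<eta> / 3\<close> \<open>M * \<rho> \<le> \<eta> / 3\<close> \<open>t > 0\<close> by (intro mult_left_mono) linarith+
    ultimately show "norm ((T + t *\<^sub>R S) x) \<le> 1 + t * (a + \<eta>)" unfolding apply_eq by linarith
  next
    fix x :: 'a assume "norm x = 1" "norm (T x) \<le> 1 - \<delta>"
    have "norm (T x + t *\<^sub>R S x) \<le> norm (T x) + t * norm (S x)"
      using norm_triangle_ineq[of "T x" "t *\<^sub>R S x"] \<open>t > 0\<close> by simp
    also have "\<dots> \<le> (1 - \<delta>) + t * M"
      using \<open>norm (T x) \<le> 1 - \<delta>\<close> norm_blinfun[of S x] \<open>norm x = 1\<close> \<open>t > 0\<close> unfolding M_def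
      by (intro add_mono mult_left_mono) auto
    also have "\<dots> \<le> 1 + t * (a + \<eta>)"
      using t_small \<open>t * (- M) \<le> t * a\<close> \<open>0 \<le> t * \<eta>\<close> \<open>t > 0\<close> by (simp add: algebra_simps)
    finally show "norm ((T + t *\<^sub>R S) x) \<le> 1 + t * (a + \<eta>)" unfolding apply_eq .
  next
    show "0 \<le> 1 + t * (a + \<eta>)"
      using t_small \<open>t * (- M) \<le> t * a\<close> \<open>0 \<le> t * \<eta>\<close> \<open>t > 0\<close> by (simp add: algebra_simps)
  qed
  then show ?thesis using \<open>t > 0\<close> unfolding a_def by blast
qed

lemma norming_functional_le_if_perturbation_bound:
  fixes T R :: "'a::real_normed_vector \<Rightarrow>\<^sub>L 'b::real_normed_vector"
  assumes "T \<in> compact_ops" and "norm T = 1" and "R \<in> compact_ops"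
    and g: "bounded_linear_on compact_ops g" "dual_norm_on compact_ops g = 1" "g T = norm T"
    and bound: "\<And>\<eta>. \<eta> > 0 \<Longrightarrow> \<exists>t>0. norm (T + t *\<^sub>R R) \<le> 1 + t * (c + \<eta>)"
  shows "g R \<le> c"
proof (rule field_le_epsilon)
  fix \<eta> :: real assume "\<eta> > 0"
  then obtain t where "t > 0" and t: "norm (T + t *\<^sub>R R) \<le> 1 + t * (c + \<eta>)"
    using bound by blast
  have scale: "\<And>a R :: 'a \<Rightarrow>\<^sub>L 'b. R \<in> compact_ops \<Longrightarrow> a *\<^sub>R R \<in> compact_ops"
    by (rule compact_ops_scaleR)
  have "T + t *\<^sub>R R \<in> compact_ops"
    using compact_ops_add[OF \<open>T \<in> compact_ops\<close> scale[OF \<open>R \<in> compact_ops\<close>]] .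
  then have "g (T + t *\<^sub>R R) \<le> norm (T + t *\<^sub>R R)"
    using abs_le_dual_norm_on[OF scale g(1)] g(2) by fastforce
  moreover have "g (T + t *\<^sub>R R) = 1 + t * g R"
    using g(1,3) \<open>norm T = 1\<close> \<open>T \<in> compact_ops\<close> \<open>R \<in> compact_ops\<close> scale
    unfolding bounded_linear_on_def by simp
  ultimately have "t * g R \<le> t * (c + \<eta>)" using t by simp
  then show "g R \<le> c + \<eta>" using \<open>t > 0\<close> by simp
qed

lemma smooth_point_on_compact_ops_if_perturbation_bound:
  fixes T :: "'a::real_normed_vector \<Rightarrow>\<^sub>L 'b::real_normed_vector" and \<psi> :: "'b \<Rightarrow>\<^sub>L real"
  assumes "T \<in> compact_ops" and "norm T = 1" and "norm x0 = 1" and "norm \<psi> = 1" and "\<psi> (T x0) = 1"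
    and bound: "\<And>S \<eta>. S \<in> compact_ops \<Longrightarrow> \<eta> > 0 \<Longrightarrow>
      \<exists>t>0. norm (T + t *\<^sub>R S) \<le> 1 + t * (\<psi> (S x0) + \<eta>)"
  shows "smooth_point_on compact_ops T"
proof -
  define f where "f S = \<psi> (blinfun_apply S x0)" for S :: "'a \<Rightarrow>\<^sub>L 'b"
  have f: "bounded_linear_on compact_ops f" "dual_norm_on compact_ops f = 1" "f T = norm T"
    using bounded_linear_on_evaluation dual_norm_on_evaluation[OF _ _ \<open>T \<in> compact_ops\<close>] assms(2-5)
    unfolding f_def by simp_all
  have "g S = f S" if g: "bounded_linear_on compact_ops g" "dual_norm_on compact_ops g = 1" "g T = norm T"
    and "S \<in> compact_ops" for g :: "('a \<Rightarrow>\<^sub>L 'b) \<Rightarrow> real" and S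
  proof -
    have "- S \<in> compact_ops" using compact_ops_scaleR[OF \<open>S \<in> compact_ops\<close>, of "- 1"] by simp
    have le: "g R \<le> f R" if "R \<in> compact_ops" for R
      using norming_functional_le_if_perturbation_bound[OF assms(1,2) that g] bound[OF that]
      unfolding f_def by blast
    have "g (- S) = - g S" "f (- S) = - f S"
      using g(1) \<open>S \<in> compact_ops\<close> unfolding bounded_linear_on_def f_def
      by (metis scaleR_minus1_left mult_minus1, simp add: blinfun.minus_left blinfun.minus_right)
    then show ?thesis using le[OF \<open>S \<in> compact_ops\<close>] le[OF \<open>- S \<in> compact_ops\<close>] by linarith
  qed
  moreover have "T \<noteq> 0" using \<open>norm T = 1\<close> by auto
  ultimately show ?thesis unfolding smooth_point_on_def using \<open>T \<in> compact_ops\<close> f by blast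
qed

theorem proposition2p7:
  fixes T :: "'a::banach \<Rightarrow>\<^sub>L 'b::banach"
  assumes "reflexive_space TYPE('a)" and "smooth_space TYPE('b)"
    and "dim_gt_one TYPE('a)" and "dim_gt_one TYPE('b)"
    and "T \<in> compact_ops" and "norm T = 1"
    and "\<forall>\<epsilon>>0. \<exists>A \<in> compact_ops. A \<noteq> T \<and> uniform_BPB_approx T \<epsilon> A
                      \<and> smooth_point_on compact_ops A"
  shows "smooth_point_on compact_ops T"
proof -
  have near: "\<exists>\<delta>>0. \<exists>u. almost_norming_near T \<delta> u \<epsilon>" if "\<epsilon> > 0" for \<epsilon>
    using assms(6,7) that uniform_BPB_approx_almost_norming_near by metis
  obtain x0 where x0: "norm x0 = 1" "norm (T x0) = 1"
    using norm_attained_if_almost_norming_near[OF \<open>norm T = 1\<close> near] by blast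
  have "T x0 \<noteq> 0" using x0 by auto
  then have "smooth_point (T x0)" using assms(2) unfolding smooth_space_def by blast
  obtain \<psi> :: "'b \<Rightarrow>\<^sub>L real" where \<psi>: "norm \<psi> = 1" "\<psi> (T x0) = 1"
    using norming_functional_exists[OF \<open>T x0 \<noteq> 0\<close>] x0 by metis
  show ?thesis
  proof (rule smooth_point_on_compact_ops_if_perturbation_bound[OF assms(5,6) x0(1) \<psi>])
    fix S :: "'a \<Rightarrow>\<^sub>L 'b" and \<eta> :: real
    assume "\<eta> > 0"
    then show "\<exists>t>0. norm (T + t *\<^sub>R S) \<le> 1 + t * (\<psi> (S x0) + \<eta>)"
      using norm_perturbation_le[OF \<open>norm T = 1\<close> x0 _ \<open>smooth_point (T x0)\<close> \<psi>]
        almost_norming_near_norming_point[OF near x0] by blast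
  qed
qed

end
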